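(* Let $\psi:(0,\infty)\to(0,\infty)$ be continuous with $\int_0^\infty\psi(r)(1\wedge r^2)r^{d-1}dr<\infty$ and $\int_0^1r^{d-1}\psi(r)^{-1}dr<\infty$. Let $\gamma(r):=\inf_{0<s\le r+1}\psi(s)$, assume $\gamma(r)>0$ for all $r>0$ and $\int_{\{|x|\ge1\}}\frac{e^{-3V(x)}}{\gamma(|x|)}dx<\infty$. Suppose there is $\alpha_0\in(0,1)$ with $$\int_1^\infty r^{d+\alpha_0-1}\psi(r)dr<\infty\quad\text{and}\quad\limsup_{|x|\to\infty}\frac{\sup_{|z|\ge|x|}e^{-V(z)}}{\gamma(|x|)|x|^{\alpha_0}}=0.$$ Then there is $C_1>0$ such that for all $f\in C_b^\infty(\mathbb R^d)$, $$\int\big(f(x)-\mu_{2V}(f)\big)^2e^{V(x)}\gamma(|x|)\,\mu_{2V}(dx)\le C_1D_{\psi,V}(f,f).$$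
   Context: Let $d\ge1$. $V:\mathbb R^d\to\mathbb R$ is a locally bounded measurable function such that $e^{-V}$ is bounded and $\int e^{-V(x)}dx<\infty$. $\mu_{2V}(dx):=\frac{e^{-2V(x)}}{\int e^{-2V(y)}dy}dx$, $\mu_{2V}(f)=\int f\,d\mu_{2V}$. $C_b^\infty$ denotes smooth functions bounded with all derivatives. $D_{\psi,V}(f,f):=\frac12\iint(f(y)-f(x))^2\psi(|x-y|)e^{-V(y)}dy\,e^{-V(x)}dx$. *)

theory Defs
  imports "HOL-Analysis.Analysis"
begin

fun iter_dderiv :: "'a::euclidean_space list \<Rightarrow> ('a \<Rightarrow> real) \<Rightarrow> 'a \<Rightarrow> real" where
  "iter_dderiv [] f = f"
| "iter_dderiv (v # vs) f = (\<lambda>x. frechet_derivative (iter_dderiv vs f) (at x) v)"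

definition Cb_inf :: "('a::euclidean_space \<Rightarrow> real) set" where
  "Cb_inf = {f. \<forall>vs. (\<forall>x. iter_dderiv vs f differentiable (at x))
                     \<and> bounded (range (iter_dderiv vs f))}"

definition gamma_fn :: "(real \<Rightarrow> real) \<Rightarrow> real \<Rightarrow> real" where
  "gamma_fn \<psi> r = (INF s\<in>{0<..r+1}. \<psi> s)"

definition mu2V :: "('a::euclidean_space \<Rightarrow> real) \<Rightarrow> ('a \<Rightarrow> real) \<Rightarrow> real" where
  "mu2V V f = (\<integral>x. f x * exp (-2 * V x) \<partial>lborel) / (\<integral>y. exp (-2 * V y) \<partial>lborel)"

definition D_form :: "(real \<Rightarrow> real) \<Rightarrow> ('a::euclidean_space \<Rightarrow> real) \<Rightarrow> ('a \<Rightarrow> real) \<Rightarrow> ennreal" where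
  "D_form \<psi> V f = (\<integral>\<^sup>+x. (\<integral>\<^sup>+y. ennreal (1/2 * (f y - f x)^2 * \<psi> (norm (x - y))
                      * exp (- V y)) \<partial>lborel) * ennreal (exp (- V x)) \<partial>lborel)"

end

theory Submission
  imports Defs
begin

text \<open>
  Write \<open>Z = \<integral> e\<^sup>-\<^sup>2\<^sup>V\<close> and \<open>W(x) = \<gamma>(|x|) e\<^sup>-\<^sup>V\<^sup>(\<^sup>x\<^sup>) / Z\<close>, so that the left-hand side of the
  theorem is \<open>\<integral> (f - \<mu>\<^sub>2\<^sub>V(f))\<^sup>2 W\<close>.

  (1) Local Poincare inequality: with \<open>m\<close> the mean of \<open>f\<close> over the unit ball \<open>B\<close>,
  Jensen gives \<open>(f x - m)\<^sup>2 \<le> |B|\<^sup>-\<^sup>1 \<integral>\<^sub>B (f x - f z)\<^sup>2 dz\<close>; for \<open>z \<in> B\<close> we have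
  \<open>|x - z| \<le> |x| + 1\<close>, hence \<open>\<gamma>(|x|) \<le> \<psi>(|x - z|)\<close>, and \<open>e\<^sup>-\<^sup>V\<close> is bounded below on \<open>B\<close>.
  Integrating gives \<open>\<integral> (f - m)\<^sup>2 W \<le> c D\<^sub>\<psi>\<^sub>,\<^sub>V(f,f)\<close>.

  (2) Replacing \<open>m\<close> by \<open>\<mu>\<^sub>2\<^sub>V(f)\<close>: by a weighted Cauchy-Schwarz inequality
  \<open>(m - \<mu>\<^sub>2\<^sub>V(f))\<^sup>2 \<le> (\<integral> (f - m)\<^sup>2 W) \<cdot> \<integral> e\<^sup>-\<^sup>3\<^sup>V/(\<gamma> Z)\<close>, and the last integral is finite by
  the integrability hypothesis on \<open>e\<^sup>-\<^sup>3\<^sup>V/\<gamma>\<close>.  Together with \<open>(u+v)\<^sup>2 \<le> 2u\<^sup>2 + 2v\<^sup>2\<close> and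
  \<open>\<integral> W < \<infinity>\<close> this bounds \<open>\<integral> (f - \<mu>\<^sub>2\<^sub>V(f))\<^sup>2 W\<close> by a constant multiple of \<open>\<integral> (f - m)\<^sup>2 W\<close>.
\<close>

subsection \<open>Inequalities for integrals over an arbitrary measure\<close>

lemma cauchy_schwarz_weighted:
  fixes g w :: "'b \<Rightarrow> real"
  assumes g: "integrable M g" and wm: "w \<in> borel_measurable M"
    and w0: "\<And>z. w z \<ge> 0" and wpos: "\<And>z. g z \<noteq> 0 \<Longrightarrow> w z > 0"
  shows "ennreal ((integral\<^sup>L M g)\<^sup>2)
     \<le> (\<integral>\<^sup>+z. ennreal ((g z)\<^sup>2 * w z) \<partial>M) * (\<integral>\<^sup>+z. ennreal (1 / w z) \<partial>M)"
proof -
  have gm[measurable]: "g \<in> borel_measurable M" using g by auto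
  note wm[measurable]
  have split: "ennreal \<bar>g z\<bar> = ennreal (\<bar>g z\<bar> * sqrt (w z)) * ennreal (sqrt (1 / w z))" for z
  proof (cases "g z = 0")
    case False
    then have "w z > 0" using wpos by auto
    then show ?thesis
      by (simp add: ennreal_mult[symmetric] real_sqrt_divide field_simps)
  qed simp
  have "ennreal ((integral\<^sup>L M g)\<^sup>2) = (ennreal (norm (integral\<^sup>L M g)))\<^sup>2"
    by (simp add: ennreal_power)
  also have "\<dots> \<le> (\<integral>\<^sup>+z. ennreal (norm (g z)) \<partial>M)\<^sup>2"
    by (intro power_mono integral_norm_bound_ennreal g) simp
  also have "\<dots> = (\<integral>\<^sup>+z. ennreal (\<bar>g z\<bar> * sqrt (w z)) * ennreal (sqrt (1 / w z)) \<partial>M)\<^sup>2"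
    using split by simp
  also have "\<dots> \<le> (\<integral>\<^sup>+z. (ennreal (\<bar>g z\<bar> * sqrt (w z)))\<^sup>2 \<partial>M)
                 * (\<integral>\<^sup>+z. (ennreal (sqrt (1 / w z)))\<^sup>2 \<partial>M)"
    by (rule Cauchy_Schwarz_nn_integral) measurable
  also have "\<dots> = (\<integral>\<^sup>+z. ennreal ((g z)\<^sup>2 * w z) \<partial>M) * (\<integral>\<^sup>+z. ennreal (1 / w z) \<partial>M)"
    using w0 by (simp add: ennreal_power power_mult_distrib)
  finally show ?thesis .
qed

lemma nn_integral_scale:
  fixes h :: "'b \<Rightarrow> real"
  assumes hm: "(\<lambda>z. ennreal (h z)) \<in> borel_measurable M" and h0: "\<And>z. 0 \<le> h z"
    and "0 \<le> a" "0 \<le> b"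
  shows "(\<integral>\<^sup>+z. ennreal (a * h z * b) \<partial>M) = ennreal a * ((\<integral>\<^sup>+z. ennreal (h z) \<partial>M) * ennreal b)"
proof -
  have "ennreal (a * h z * b) = (ennreal a * ennreal b) * ennreal (h z)" for z
    using assms h0[of z] by (simp add: ennreal_mult ac_simps)
  then have "(\<integral>\<^sup>+z. ennreal (a * h z * b) \<partial>M) = (\<integral>\<^sup>+z. (ennreal a * ennreal b) * ennreal (h z) \<partial>M)"
    by simp
  also have "\<dots> = (ennreal a * ennreal b) * (\<integral>\<^sup>+z. ennreal (h z) \<partial>M)"
    by (rule nn_integral_cmult[OF hm])
  finally show ?thesis
    by (simp only: ac_simps)
qed

lemma sq_dist_to_mean_le:
  fixes f :: "'b \<Rightarrow> real"
  assumes B: "B \<in> sets M" "emeasure M B = ennreal \<beta>" "\<beta> > 0"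
    and fm: "f \<in> borel_measurable M" and fb: "\<And>z. \<bar>f z\<bar> \<le> Kf"
  shows "ennreal ((f x - (\<integral>z. indicator B z * f z \<partial>M) / \<beta>)\<^sup>2)
    \<le> ennreal (1 / \<beta>) * (\<integral>\<^sup>+z. ennreal (indicator B z * (f x - f z)\<^sup>2) \<partial>M)"
proof -
  note B(1)[measurable] fm[measurable]
  have fb': "\<bar>f z\<bar> \<le> \<bar>Kf\<bar>" for z
    using fb[of z] by linarith
  have int_B: "integrable M (\<lambda>z. c * indicator B z)" for c :: real
    using B by (intro integrable_mult_right integrable_real_indicator) auto
  have intf: "integrable M (\<lambda>z. indicator B z * f z)"
    by (rule Bochner_Integration.integrable_bound[OF int_B[of Kf]])
       (use fb' in \<open>auto simp: indicator_def abs_mult intro!: AE_I2\<close>)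
  define g where "g z = f x * indicator B z - indicator B z * f z" for z
  have g_int: "integrable M g" unfolding g_def using int_B intf by auto
  have "integral\<^sup>L M g = \<beta> * (f x - (\<integral>z. indicator B z * f z \<partial>M) / \<beta>)"
    unfolding g_def using int_B intf B by (simp add: measure_def field_simps)
  then have "ennreal ((f x - (\<integral>z. indicator B z * f z \<partial>M) / \<beta>)\<^sup>2)
      = ennreal (1 / \<beta>\<^sup>2) * ennreal ((integral\<^sup>L M g)\<^sup>2)"
    using B by (simp add: ennreal_mult[symmetric] power_mult_distrib)
  also have "\<dots> \<le> ennreal (1 / \<beta>\<^sup>2) * ((\<integral>\<^sup>+z. ennreal ((g z)\<^sup>2 * indicator B z) \<partial>M)
                                    * (\<integral>\<^sup>+z. ennreal (1 / indicator B z) \<partial>M))"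
    by (intro mult_left_mono cauchy_schwarz_weighted g_int)
       (auto simp: g_def indicator_def)
  also have "(\<integral>\<^sup>+z. ennreal ((g z)\<^sup>2 * indicator B z) \<partial>M)
      = (\<integral>\<^sup>+z. ennreal (indicator B z * (f x - f z)\<^sup>2) \<partial>M)"
    by (intro nn_integral_cong) (simp add: g_def indicator_def power2_eq_square)
  also have "(\<integral>\<^sup>+z. ennreal (1 / indicator B z) \<partial>M) = (\<integral>\<^sup>+z. indicator B z \<partial>M)"
    by (intro nn_integral_cong) (simp add: indicator_def)
  also have "\<dots> = ennreal \<beta>"
    using B by simp
  also have "ennreal (1 / \<beta>\<^sup>2) * ((\<integral>\<^sup>+z. ennreal (indicator B z * (f x - f z)\<^sup>2) \<partial>M) * ennreal \<beta>)
      = (ennreal (1 / \<beta>\<^sup>2) * ennreal \<beta>) * (\<integral>\<^sup>+z. ennreal (indicator B z * (f x - f z)\<^sup>2) \<partial>M)"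
    by (simp only: ac_simps)
  also have "ennreal (1 / \<beta>\<^sup>2) * ennreal \<beta> = ennreal (1 / \<beta>)"
    using B by (simp add: ennreal_mult[symmetric] power2_eq_square)
  finally show ?thesis .
qed

lemma sq_dist_to_density_mean_le:
  fixes f \<rho> w :: "'b \<Rightarrow> real"
  assumes \<rho>: "integrable M \<rho>" "integral\<^sup>L M \<rho> = 1"
    and fm: "f \<in> borel_measurable M" and fb: "\<And>z. \<bar>f z\<bar> \<le> Kf"
    and wm: "w \<in> borel_measurable M" and wpos: "\<And>z. w z > 0"
  shows "ennreal ((m - (\<integral>z. f z * \<rho> z \<partial>M))\<^sup>2)
    \<le> (\<integral>\<^sup>+z. ennreal ((f z - m)\<^sup>2 * ((\<rho> z)\<^sup>2 * w z)) \<partial>M) * (\<integral>\<^sup>+z. ennreal (1 / w z) \<partial>M)"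
proof -
  have bound: "norm (f z * \<rho> z) \<le> norm (Kf * \<bar>\<rho> z\<bar>)" for z
  proof -
    have "\<bar>f z\<bar> * \<bar>\<rho> z\<bar> \<le> \<bar>Kf\<bar> * \<bar>\<rho> z\<bar>"
      using fb[of z] by (intro mult_right_mono) auto
    then show ?thesis
      by (simp add: abs_mult)
  qed
  have intf: "integrable M (\<lambda>z. f z * \<rho> z)"
    using \<rho>(1) fm bound
    by (intro Bochner_Integration.integrable_bound[OF integrable_mult_right[OF integrable_abs[OF \<rho>(1)]]])
       (auto intro: AE_I2)
  define g where "g z = m * \<rho> z - f z * \<rho> z" for z
  have g_int: "integrable M g"
    unfolding g_def using intf \<rho> by auto
  have "ennreal ((integral\<^sup>L M g)\<^sup>2)
      \<le> (\<integral>\<^sup>+z. ennreal ((g z)\<^sup>2 * w z) \<partial>M) * (\<integral>\<^sup>+z. ennreal (1 / w z) \<partial>M)"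
    by (rule cauchy_schwarz_weighted[OF g_int wm]) (use wpos less_imp_le in auto)
  moreover have "integral\<^sup>L M g = m - (\<integral>z. f z * \<rho> z \<partial>M)"
    unfolding g_def using intf \<rho> by simp
  moreover have "(g z)\<^sup>2 * w z = (f z - m)\<^sup>2 * ((\<rho> z)\<^sup>2 * w z)" for z
    unfolding g_def by (simp add: power2_eq_square algebra_simps)
  ultimately show ?thesis
    by simp
qed

lemma weighted_variance_recentre:
  fixes f W :: "'b \<Rightarrow> real"
  assumes fm: "f \<in> borel_measurable M" and Wm: "W \<in> borel_measurable M"
    and W0: "\<And>x. W x \<ge> 0"
    and shift: "ennreal ((m - a)\<^sup>2) \<le> (\<integral>\<^sup>+x. ennreal ((f x - m)\<^sup>2 * W x) \<partial>M) * K"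
  shows "(\<integral>\<^sup>+x. ennreal ((f x - a)\<^sup>2 * W x) \<partial>M)
    \<le> (2 + 2 * K * (\<integral>\<^sup>+x. ennreal (W x) \<partial>M)) * (\<integral>\<^sup>+x. ennreal ((f x - m)\<^sup>2 * W x) \<partial>M)"
proof -
  note fm[measurable] Wm[measurable]
  define T where "T = (\<integral>\<^sup>+x. ennreal ((f x - m)\<^sup>2 * W x) \<partial>M)"
  have pointwise: "ennreal ((f x - a)\<^sup>2 * W x)
      \<le> 2 * ennreal ((f x - m)\<^sup>2 * W x) + 2 * ennreal ((m - a)\<^sup>2) * ennreal (W x)" for x
  proof -
    have "(f x - a)\<^sup>2 \<le> 2 * (f x - m)\<^sup>2 + 2 * (m - a)\<^sup>2"
      using sum_squares_ge_zero[of "f x - m - (m - a)" 0]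
      by (simp add: power2_eq_square algebra_simps)
    then have "(f x - a)\<^sup>2 * W x \<le> (2 * (f x - m)\<^sup>2 + 2 * (m - a)\<^sup>2) * W x"
      using W0[of x] by (rule mult_right_mono)
    then have "ennreal ((f x - a)\<^sup>2 * W x) \<le> ennreal (2 * ((f x - m)\<^sup>2 * W x) + 2 * (m - a)\<^sup>2 * W x)"
      by (simp add: ennreal_leI distrib_right)
    also have "\<dots> = 2 * ennreal ((f x - m)\<^sup>2 * W x) + 2 * ennreal ((m - a)\<^sup>2) * ennreal (W x)"
      using W0[of x] by (subst ennreal_plus) (auto simp: ennreal_mult)
    finally show ?thesis .
  qed
  have "(\<integral>\<^sup>+x. ennreal ((f x - a)\<^sup>2 * W x) \<partial>M)
      \<le> (\<integral>\<^sup>+x. 2 * ennreal ((f x - m)\<^sup>2 * W x) + 2 * ennreal ((m - a)\<^sup>2) * ennreal (W x) \<partial>M)"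
    by (intro nn_integral_mono pointwise)
  also have "\<dots> = 2 * T + 2 * ennreal ((m - a)\<^sup>2) * (\<integral>\<^sup>+x. ennreal (W x) \<partial>M)"
    unfolding T_def by (subst nn_integral_add) (auto simp: nn_integral_cmult)
  also have "\<dots> \<le> 2 * T + 2 * (T * K) * (\<integral>\<^sup>+x. ennreal (W x) \<partial>M)"
    using shift unfolding T_def by (intro add_mono mult_left_mono mult_right_mono) auto
  also have "\<dots> = (2 + 2 * K * (\<integral>\<^sup>+x. ennreal (W x) \<partial>M)) * T"
    by (simp add: algebra_simps)
  finally show ?thesis unfolding T_def .
qed


lemma gamma_fn_le:
  assumes psi_pos: "\<And>r. r > 0 \<Longrightarrow> \<psi> r > 0" and t: "0 < t" "t \<le> r + 1"
  shows "gamma_fn \<psi> r \<le> \<psi> t"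
proof -
  have "bdd_below (\<psi> ` {0<..r + 1})"
    using psi_pos by (intro bdd_belowI[of _ 0]) (auto intro: less_imp_le)
  then show ?thesis
    unfolding gamma_fn_def by (rule cINF_lower) (use t in simp)
qed

lemma gamma_fn_antimono:
  assumes psi_pos: "\<And>r. r > 0 \<Longrightarrow> \<psi> r > 0" and "0 \<le> r" "r \<le> s"
  shows "gamma_fn \<psi> s \<le> gamma_fn \<psi> r"
proof -
  have "bdd_below (\<psi> ` {0<..s + 1})"
    using psi_pos by (intro bdd_belowI[of _ 0]) (auto intro: less_imp_le)
  then show ?thesis
    unfolding gamma_fn_def using assms(2,3) by (intro cINF_superset_mono) auto
qed

lemma gamma_fn_pos:
  assumes psi_pos: "\<And>r. r > 0 \<Longrightarrow> \<psi> r > 0"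
    and gamma_pos: "\<And>r. r > 0 \<Longrightarrow> gamma_fn \<psi> r > 0" and "0 \<le> r"
  shows "gamma_fn \<psi> r > 0"
proof (cases "r = 0")
  case True
  then show ?thesis
    using gamma_fn_antimono[of \<psi> 0 1, OF psi_pos] gamma_pos[of 1] by simp
qed (use assms in auto)

text \<open>Being a monotone function of \<open>|x|\<close>, \<open>x \<mapsto> \<gamma>(|x|)\<close> is Borel measurable.\<close>
lemma gamma_fn_norm_measurable:
  assumes psi_pos: "\<And>r. r > 0 \<Longrightarrow> \<psi> r > 0"
  shows "(\<lambda>x::'a::euclidean_space. gamma_fn \<psi> (norm x)) \<in> borel_measurable lborel"
proof -
  have "mono (\<lambda>r. - gamma_fn \<psi> (max 0 r))"
    by (auto simp: mono_def intro!: gamma_fn_antimono[OF psi_pos])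
  then have [measurable]: "(\<lambda>r. - gamma_fn \<psi> (max 0 r)) \<in> borel_measurable borel"
    by (rule borel_measurable_mono)
  have "(\<lambda>x::'a. - (- gamma_fn \<psi> (max 0 (norm x)))) \<in> borel_measurable lborel"
    by measurable
  then show ?thesis
    by simp
qed


definition partition_fn :: "('a::euclidean_space \<Rightarrow> real) \<Rightarrow> real" where
  "partition_fn V = (\<integral>y. exp (-2 * V y) \<partial>lborel)"

text \<open>The weight \<open>e\<^sup>V \<gamma>(|x|)\<close> against \<open>\<mu>\<^sub>2\<^sub>V\<close>, written as a density w.r.t. Lebesgue measure.\<close>
definition weight :: "(real \<Rightarrow> real) \<Rightarrow> ('a::euclidean_space \<Rightarrow> real) \<Rightarrow> 'a \<Rightarrow> real" where
  "weight \<psi> V x = gamma_fn \<psi> (norm x) * exp (- V x) / partition_fn V"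

text \<open>Since \<open>e\<^sup>-\<^sup>V\<close> is bounded and integrable, so is \<open>e\<^sup>-\<^sup>2\<^sup>V = e\<^sup>-\<^sup>V \<cdot> e\<^sup>-\<^sup>V\<close>.\<close>
lemma exp_2V_integrable:
  fixes V :: "'a::euclidean_space \<Rightarrow> real"
  assumes V_meas: "V \<in> borel_measurable lborel"
    and V_expbdd: "bounded (range (\<lambda>x. exp (- V x)))"
    and V_int: "integrable lborel (\<lambda>x. exp (- V x))"
  shows "integrable lborel (\<lambda>x. exp (-2 * V x))"
proof -
  obtain Mb where Mb: "\<And>x. exp (- V x) \<le> Mb"
    using V_expbdd unfolding bounded_iff by auto
  have bound: "norm (exp (-2 * V x)) \<le> norm (Mb * exp (- V x))" for x
  proof -
    have "exp (-2 * V x) = exp (- V x) * exp (- V x)"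
      by (simp add: mult_exp_exp)
    also have "\<dots> \<le> Mb * exp (- V x)"
      using Mb[of x] by (intro mult_right_mono) auto
    finally show ?thesis
      by simp
  qed
  show ?thesis
  proof (rule Bochner_Integration.integrable_bound)
    show "integrable lborel (\<lambda>x. Mb * exp (- V x))"
      using V_int by auto
  qed (use V_meas bound in auto)
qed

lemma partition_fn_pos:
  fixes V :: "'a::euclidean_space \<Rightarrow> real"
  assumes int2: "integrable lborel (\<lambda>x. exp (-2 * V x))"
  shows "partition_fn V > 0"
proof -
  have "partition_fn V \<noteq> 0"
  proof
    assume "partition_fn V = 0"
    then have "AE x in lborel. exp (-2 * V x) = 0"
      using integral_nonneg_eq_0_iff_AE[OF int2] unfolding partition_fn_def by auto
    then have "UNIV \<in> null_sets (lborel::'a measure)"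
      using AE_iff_null_sets[of UNIV "lborel::'a measure"] by simp
    then show False
      by (auto dest: null_setsD1)
  qed
  moreover have "partition_fn V \<ge> 0"
    unfolding partition_fn_def by (intro integral_nonneg_AE) auto
  ultimately show ?thesis
    by simp
qed

lemma weight_nonneg:
  assumes psi_pos: "\<And>r. r > 0 \<Longrightarrow> \<psi> r > 0"
    and gamma_pos: "\<And>r. r > 0 \<Longrightarrow> gamma_fn \<psi> r > 0" and Zpos: "partition_fn V > 0"
  shows "weight \<psi> V x \<ge> 0"
  unfolding weight_def using Zpos gamma_fn_pos[of \<psi> "norm x", OF psi_pos gamma_pos] by simp

lemma weight_measurable:
  fixes V :: "'a::euclidean_space \<Rightarrow> real"
  assumes psi_pos: "\<And>r. r > 0 \<Longrightarrow> \<psi> r > 0" and V_meas: "V \<in> borel_measurable lborel"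
  shows "weight \<psi> V \<in> borel_measurable lborel"
proof -
  note gamma_fn_norm_measurable[OF psi_pos, measurable] V_meas[measurable]
  show ?thesis
    unfolding weight_def[abs_def] by measurable
qed

text \<open>The weight has finite total mass, as \<open>\<gamma>(|x|) \<le> \<gamma>(0)\<close> and \<open>e\<^sup>-\<^sup>V\<close> is integrable.\<close>
lemma weight_nn_integral_finite:
  fixes V :: "'a::euclidean_space \<Rightarrow> real"
  assumes V_meas: "V \<in> borel_measurable lborel"
    and V_int: "integrable lborel (\<lambda>x. exp (- V x))"
    and psi_pos: "\<And>r. r > 0 \<Longrightarrow> \<psi> r > 0"
    and gamma_pos: "\<And>r. r > 0 \<Longrightarrow> gamma_fn \<psi> r > 0"
    and Zpos: "partition_fn V > 0"
  shows "(\<integral>\<^sup>+x. ennreal (weight \<psi> V x) \<partial>lborel) < \<infinity>"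
proof -
  note V_meas[measurable]
  define c where "c = gamma_fn \<psi> 0 / partition_fn V"
  have c0: "c \<ge> 0"
    unfolding c_def using gamma_fn_pos[of \<psi> 0, OF psi_pos gamma_pos] Zpos by simp
  have "weight \<psi> V x \<le> c * exp (- V x)" for x
    unfolding weight_def c_def using Zpos gamma_fn_antimono[of \<psi> 0 "norm x", OF psi_pos]
    by (simp add: divide_right_mono)
  then have "(\<integral>\<^sup>+x. ennreal (weight \<psi> V x) \<partial>lborel) \<le> (\<integral>\<^sup>+x. ennreal c * ennreal (exp (- V x)) \<partial>lborel)"
    using c0 by (intro nn_integral_mono) (simp add: ennreal_mult[symmetric] ennreal_leI)
  also have "\<dots> = ennreal c * (\<integral>\<^sup>+x. ennreal (exp (- V x)) \<partial>lborel)"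
    by (rule nn_integral_cmult) measurable
  also have "\<dots> < \<infinity>"
    using V_int by (simp add: integrable_iff_bounded ennreal_mult_less_top)
  finally show ?thesis .
qed

text \<open>On the unit ball the integrand \<open>e\<^sup>-\<^sup>3\<^sup>V/\<gamma>(|x|)\<close> is bounded, because \<open>e\<^sup>-\<^sup>V \<le> M\<close> and
  \<open>\<gamma>(|x|) \<ge> \<gamma>(1) > 0\<close> there.\<close>
lemma exp_3V_over_gamma_le:
  assumes psi_pos: "\<And>r. r > 0 \<Longrightarrow> \<psi> r > 0"
    and gamma_pos: "\<And>r. r > 0 \<Longrightarrow> gamma_fn \<psi> r > 0"
    and Mb: "\<And>x. exp (- V x) \<le> Mb" and x: "norm x \<le> 1"
  shows "exp (-3 * V x) / gamma_fn \<psi> (norm x) \<le> Mb ^ 3 / gamma_fn \<psi> 1"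
proof -
  have "exp (-3 * V x) = exp (- V x) ^ 3"
    using exp_of_nat_mult[of 3 "- V x"] by simp
  also have "\<dots> \<le> Mb ^ 3"
    using Mb[of x] by (intro power_mono) auto
  finally have "exp (-3 * V x) \<le> Mb ^ 3" .
  moreover have "gamma_fn \<psi> 1 \<le> gamma_fn \<psi> (norm x)"
    using x by (intro gamma_fn_antimono[OF psi_pos]) auto
  moreover have "Mb > 0"
    using Mb[of x] exp_gt_zero less_le_trans by blast
  ultimately show ?thesis
    using gamma_fn_pos[of \<psi> 1, OF psi_pos gamma_pos] by (intro frac_le) auto
qed

text \<open>Finiteness of \<open>\<integral> e\<^sup>-\<^sup>3\<^sup>V/\<gamma>(|x|)\<close>: outside the unit ball this is the integrability
  hypothesis, inside it the integrand is bounded by \<open>(sup e\<^sup>-\<^sup>V)\<^sup>3/\<gamma>(1)\<close>.\<close>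
lemma inverse_weight_nn_integral_finite:
  fixes V :: "'a::euclidean_space \<Rightarrow> real"
  assumes V_meas: "V \<in> borel_measurable lborel"
    and V_expbdd: "bounded (range (\<lambda>x. exp (- V x)))"
    and psi_pos: "\<And>r. r > 0 \<Longrightarrow> \<psi> r > 0"
    and gamma_pos: "\<And>r. r > 0 \<Longrightarrow> gamma_fn \<psi> r > 0"
    and V_gamma_int: "set_integrable lborel {x. norm x \<ge> 1}
                        (\<lambda>x. exp (-3 * V x) / gamma_fn \<psi> (norm x))"
  shows "(\<integral>\<^sup>+x. ennreal (exp (-3 * V x) / gamma_fn \<psi> (norm x)) \<partial>lborel) < \<infinity>"
proof -
  define S where "S = {x::'a. norm x \<ge> 1}"
  define g where "g x = exp (-3 * V x) / gamma_fn \<psi> (norm x)" for x :: 'a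
  note gamma_fn_norm_measurable[OF psi_pos, measurable] V_meas[measurable]
  have S_sets[measurable]: "S \<in> sets lborel"
    unfolding S_def by measurable
  have g_meas[measurable]: "g \<in> borel_measurable lborel"
    unfolding g_def by measurable
  have ball_sets[measurable]: "ball (0::'a) 1 \<in> sets borel"
    by simp
  obtain Mb where Mb: "\<And>x. exp (- V x) \<le> Mb"
    using V_expbdd unfolding bounded_iff by auto
  define c where "c = Mb ^ 3 / gamma_fn \<psi> 1"
  have g0: "g x \<ge> 0" for x
    unfolding g_def using gamma_fn_pos[of \<psi> "norm x", OF psi_pos gamma_pos] by simp
  have g_bound: "ennreal (g x)
      \<le> ennreal (norm (indicator S x *\<^sub>R g x)) + ennreal c * indicator (ball 0 1) x" for x
  proof (cases "x \<in> S")
    case False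
    then have "g x \<le> c"
      unfolding g_def c_def S_def by (intro exp_3V_over_gamma_le[OF psi_pos gamma_pos Mb]) auto
    then show ?thesis
      using False unfolding S_def by (simp add: ennreal_leI)
  qed (use g0 in simp)
  have "(\<integral>\<^sup>+x. ennreal (g x) \<partial>lborel)
      \<le> (\<integral>\<^sup>+x. ennreal (norm (indicator S x *\<^sub>R g x)) + ennreal c * indicator (ball 0 1) x \<partial>lborel)"
    by (intro nn_integral_mono g_bound)
  also have "\<dots> = (\<integral>\<^sup>+x. ennreal (norm (indicator S x *\<^sub>R g x)) \<partial>lborel)
                 + ennreal c * emeasure lborel (ball (0::'a) 1)"
    using ball_sets by (subst nn_integral_add) (auto simp: nn_integral_cmult_indicator)
  also have "\<dots> < \<infinity>"
    using V_gamma_int emeasure_lborel_ball_finite[of "0::'a" 1]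
    unfolding set_integrable_def integrable_iff_bounded S_def g_def
    by (simp add: ennreal_mult_less_top)
  finally show ?thesis
    unfolding g_def .
qed

text \<open>Centring at \<open>\<mu>\<^sub>2\<^sub>V(f)\<close> instead of a constant \<open>m\<close> costs at most a factor involving
  \<open>\<integral> e\<^sup>-\<^sup>3\<^sup>V/\<gamma>\<close>: instance of the previous density estimate with density
  \<open>e\<^sup>-\<^sup>2\<^sup>V/Z\<close> and weight \<open>Z \<gamma> e\<^sup>3\<^sup>V\<close>.\<close>
lemma mu2V_dist_le:
  fixes V :: "'a::euclidean_space \<Rightarrow> real" and f :: "'a \<Rightarrow> real"
  assumes V_meas: "V \<in> borel_measurable lborel"
    and int2: "integrable lborel (\<lambda>x. exp (-2 * V x))"
    and psi_pos: "\<And>r. r > 0 \<Longrightarrow> \<psi> r > 0"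
    and gamma_pos: "\<And>r. r > 0 \<Longrightarrow> gamma_fn \<psi> r > 0"
    and fm: "f \<in> borel_measurable lborel" and fb: "\<And>x. \<bar>f x\<bar> \<le> Kf"
  shows "ennreal ((m - mu2V V f)\<^sup>2)
    \<le> (\<integral>\<^sup>+x. ennreal ((f x - m)\<^sup>2 * weight \<psi> V x) \<partial>lborel)
       * (ennreal (1 / partition_fn V) * (\<integral>\<^sup>+x. ennreal (exp (-3 * V x) / gamma_fn \<psi> (norm x)) \<partial>lborel))"
proof -
  define Z where "Z = partition_fn V"
  have Zpos: "Z > 0"
    unfolding Z_def by (rule partition_fn_pos[OF int2])
  note gamma_fn_norm_measurable[OF psi_pos, measurable] V_meas[measurable]
  define \<rho> where "\<rho> x = exp (-2 * V x) / Z" for x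
  define w where "w x = gamma_fn \<psi> (norm x) * Z * exp (3 * V x)" for x
  have "integral\<^sup>L lborel \<rho> = 1"
    unfolding \<rho>_def using Zpos by (simp add: Z_def partition_fn_def)
  moreover have "w x > 0" for x
    unfolding w_def using Zpos gamma_fn_pos[of \<psi> "norm x", OF psi_pos gamma_pos] by simp
  ultimately have "ennreal ((m - (\<integral>x. f x * \<rho> x \<partial>lborel))\<^sup>2)
      \<le> (\<integral>\<^sup>+x. ennreal ((f x - m)\<^sup>2 * ((\<rho> x)\<^sup>2 * w x)) \<partial>lborel) * (\<integral>\<^sup>+x. ennreal (1 / w x) \<partial>lborel)"
    using int2 fm fb unfolding \<rho>_def w_def
    by (intro sq_dist_to_density_mean_le) auto
  moreover have "(\<integral>x. f x * \<rho> x \<partial>lborel) = mu2V V f"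
    unfolding \<rho>_def mu2V_def Z_def partition_fn_def by (simp add: times_divide_eq_right)
  moreover have "(\<rho> x)\<^sup>2 * w x = weight \<psi> V x" for x
  proof -
    have "exp (-2 * V x) * exp (-2 * V x) * exp (3 * V x) = exp (- V x)"
      by (simp add: mult_exp_exp)
    then show ?thesis
      unfolding \<rho>_def w_def weight_def Z_def[symmetric] using Zpos
      by (simp add: power2_eq_square field_simps)
  qed
  moreover have "(\<integral>\<^sup>+x. ennreal (1 / w x) \<partial>lborel)
      = ennreal (1 / Z) * (\<integral>\<^sup>+x. ennreal (exp (-3 * V x) / gamma_fn \<psi> (norm x)) \<partial>lborel)"
  proof -
    have "ennreal (1 / w x) = ennreal (1 / Z) * ennreal (exp (-3 * V x) / gamma_fn \<psi> (norm x))" for x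
    proof -
      have "1 / w x = 1 / Z * (exp (-3 * V x) / gamma_fn \<psi> (norm x))"
        unfolding w_def by (simp add: exp_minus field_simps)
      then show ?thesis
        using Zpos gamma_fn_pos[of \<psi> "norm x", OF psi_pos gamma_pos]
        by (simp only:) (rule ennreal_mult; simp)
    qed
    then show ?thesis
      by (simp add: nn_integral_cmult)
  qed
  ultimately show ?thesis
    unfolding Z_def by simp
qed


subsection \<open>The local Poincare inequality\<close>

lemma D_integrand_nonneg:
  fixes f V :: "'a::real_normed_vector \<Rightarrow> real"
  assumes psi_pos: "\<And>r. r > 0 \<Longrightarrow> \<psi> r > 0"
  shows "0 \<le> 1/2 * (f y - f x)\<^sup>2 * \<psi> (norm (x - y)) * exp (- V y)"
  using psi_pos[of "norm (x - y)"] by (cases "x = y") auto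

text \<open>As \<open>\<psi>\<close> is only continuous on \<open>(0, \<infinity>)\<close>,
  we use that \<open>\<psi>(|x - y|)\<close> is multiplied by \<open>(f y - f x)\<^sup>2 = 0\<close> when \<open>x = y\<close>, so \<open>\<psi>\<close> may be
  replaced by its extension by \<open>0\<close>, which is Borel.\<close>
lemma D_integrand_measurable:
  fixes V f :: "'a::euclidean_space \<Rightarrow> real"
  assumes psi_cont: "continuous_on {0<..} \<psi>"
    and V_meas: "V \<in> borel_measurable lborel" and fm: "f \<in> borel_measurable lborel"
  shows D_inner_measurable: "(\<lambda>y. ennreal (1/2 * (f y - f x)\<^sup>2 * \<psi> (norm (x - y)) * exp (- V y)))
            \<in> borel_measurable lborel"
    and D_outer_measurable: "(\<lambda>x. (\<integral>\<^sup>+y. ennreal (1/2 * (f y - f x)\<^sup>2 * \<psi> (norm (x - y)) * exp (- V y)) \<partial>lborel)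
              * ennreal (exp (- V x))) \<in> borel_measurable lborel"
proof -
  note V_meas[measurable] fm[measurable]
  define \<psi>' where "\<psi>' r = (if r \<in> {0<..} then \<psi> r else 0)" for r
  have [measurable]: "\<psi>' \<in> borel_measurable borel"
    unfolding \<psi>'_def using psi_cont by (intro borel_measurable_continuous_on_if) auto
  have eq: "(\<lambda>y. ennreal (1/2 * (f y - f x)\<^sup>2 * \<psi> (norm (x - y)) * exp (- V y)))
      = (\<lambda>y. ennreal (1/2 * (f y - f x)\<^sup>2 * \<psi>' (norm (x - y)) * exp (- V y)))" for x
  proof (rule ext)
    fix y
    show "ennreal (1/2 * (f y - f x)\<^sup>2 * \<psi> (norm (x - y)) * exp (- V y))
        = ennreal (1/2 * (f y - f x)\<^sup>2 * \<psi>' (norm (x - y)) * exp (- V y))"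
      by (cases "x = y") (auto simp: \<psi>'_def)
  qed
  show "(\<lambda>y. ennreal (1/2 * (f y - f x)\<^sup>2 * \<psi> (norm (x - y)) * exp (- V y))) \<in> borel_measurable lborel"
    unfolding eq by measurable
  show "(\<lambda>x. (\<integral>\<^sup>+y. ennreal (1/2 * (f y - f x)\<^sup>2 * \<psi> (norm (x - y)) * exp (- V y)) \<partial>lborel)
              * ennreal (exp (- V x))) \<in> borel_measurable lborel"
    unfolding eq by measurable
qed

text \<open>Comparison of kernels: for \<open>z\<close> in the unit ball, \<open>|x - z| \<le> |x| + 1\<close> gives
  \<open>\<gamma>(|x|) \<le> \<psi>(|x - z|)\<close>, and \<open>e\<^sup>-\<^sup>V\<^sup>(\<^sup>z\<^sup>)\<close> is bounded below by some \<open>e\<^sub>0 > 0\<close> there.\<close>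
lemma ball_kernel_bound:
  fixes V f :: "'a::euclidean_space \<Rightarrow> real"
  assumes psi_pos: "\<And>r. r > 0 \<Longrightarrow> \<psi> r > 0"
    and gamma_pos: "\<And>r. r > 0 \<Longrightarrow> gamma_fn \<psi> r > 0"
    and Zpos: "partition_fn V > 0"
    and e0: "e0 > 0" "\<And>z. z \<in> ball 0 1 \<Longrightarrow> e0 \<le> exp (- V z)"
  shows "indicator (ball 0 1) z * (f x - f z)\<^sup>2 * weight \<psi> V x
    \<le> 2 / (partition_fn V * e0) * (1/2 * (f z - f x)\<^sup>2 * \<psi> (norm (x - z)) * exp (- V z)) * exp (- V x)"
proof (cases "z \<in> ball 0 1 \<and> x \<noteq> z")
  case True
  have "norm (x - z) \<le> norm x + 1"
    using True norm_triangle_ineq4[of x z] by auto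
  then have "gamma_fn \<psi> (norm x) \<le> \<psi> (norm (x - z))"
    using True by (intro gamma_fn_le[OF psi_pos]) auto
  then have "gamma_fn \<psi> (norm x) * e0 \<le> \<psi> (norm (x - z)) * exp (- V z)"
    using True e0 gamma_fn_pos[of \<psi> "norm x", OF psi_pos gamma_pos]
    by (intro mult_mono) auto
  then have "(f x - f z)\<^sup>2 * exp (- V x) * (gamma_fn \<psi> (norm x) * e0) / (partition_fn V * e0)
      \<le> (f x - f z)\<^sup>2 * exp (- V x) * (\<psi> (norm (x - z)) * exp (- V z)) / (partition_fn V * e0)"
    using Zpos e0 by (intro divide_right_mono mult_left_mono) auto
  then show ?thesis
    using True e0 unfolding weight_def by (simp add: power2_commute field_simps)
next
  case False
  then have lhs0: "indicator (ball 0 1) z * (f x - f z)\<^sup>2 * weight \<psi> V x = 0"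
    by (auto simp: indicator_def)
  have "0 \<le> 1/2 * (f z - f x)\<^sup>2 * \<psi> (norm (x - z)) * exp (- V z)"
    by (rule D_integrand_nonneg[OF psi_pos])
  moreover have "0 \<le> 2 / (partition_fn V * e0)"
    using Zpos e0 by simp
  ultimately show ?thesis
    unfolding lhs0 by (metis mult_nonneg_nonneg exp_ge_zero)
qed

text \<open>Pointwise form of the local Poincare inequality, with \<open>m\<close> the mean of \<open>f\<close> over the
  unit ball: combine Jensen's inequality over the ball with the kernel comparison.\<close>
lemma local_poincare_pointwise:
  fixes V f :: "'a::euclidean_space \<Rightarrow> real"
  defines "\<beta> \<equiv> measure lborel (ball (0::'a) 1)"
  assumes psi_cont: "continuous_on {0<..} \<psi>"
    and psi_pos: "\<And>r. r > 0 \<Longrightarrow> \<psi> r > 0"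
    and gamma_pos: "\<And>r. r > 0 \<Longrightarrow> gamma_fn \<psi> r > 0"
    and V_meas: "V \<in> borel_measurable lborel" and Zpos: "partition_fn V > 0"
    and e0: "e0 > 0" "\<And>z. z \<in> ball 0 1 \<Longrightarrow> e0 \<le> exp (- V z)"
    and fm: "f \<in> borel_measurable lborel" and fb: "\<And>x. \<bar>f x\<bar> \<le> Kf"
  shows "ennreal ((f x - (\<integral>z. indicator (ball 0 1) z * f z \<partial>lborel) / \<beta>)\<^sup>2 * weight \<psi> V x)
    \<le> ennreal (2 / (\<beta> * partition_fn V * e0))
       * ((\<integral>\<^sup>+y. ennreal (1/2 * (f y - f x)\<^sup>2 * \<psi> (norm (x - y)) * exp (- V y)) \<partial>lborel)
          * ennreal (exp (- V x)))"
proof -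
  note V_meas[measurable] fm[measurable]
  have [measurable]: "ball (0::'a) 1 \<in> sets borel"
    by simp
  define m where "m = (\<integral>z. indicator (ball 0 1) z * f z \<partial>lborel) / \<beta>"
  define k where "k z = indicator (ball 0 1) z * (f x - f z)\<^sup>2" for z
  define H where "H y = 1/2 * (f y - f x)\<^sup>2 * \<psi> (norm (x - y)) * exp (- V y)" for y
  define c0 where "c0 = 2 / (partition_fn V * e0)"
  have \<beta>: "\<beta> > 0" "emeasure lborel (ball (0::'a) 1) = ennreal \<beta>"
    unfolding \<beta>_def using emeasure_lborel_ball_finite[of "0::'a" 1]
    by (auto intro: emeasure_eq_ennreal_measure)
  have W0: "weight \<psi> V x \<ge> 0"
    by (rule weight_nonneg[OF psi_pos gamma_pos Zpos])
  have c0: "c0 \<ge> 0"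
    unfolding c0_def using Zpos e0 by simp
  have k_meas: "(\<lambda>z. ennreal (k z)) \<in> borel_measurable lborel"
    unfolding k_def by measurable
  have k_nonneg: "k z \<ge> 0" for z
    unfolding k_def by simp
  have H: "(\<lambda>z. ennreal (H z)) \<in> borel_measurable lborel" "\<And>z. H z \<ge> 0"
    unfolding H_def using D_inner_measurable[OF psi_cont V_meas fm] D_integrand_nonneg[OF psi_pos]
    by auto
  have "ennreal ((f x - m)\<^sup>2 * weight \<psi> V x) = ennreal ((f x - m)\<^sup>2) * ennreal (weight \<psi> V x)"
    using W0 by (simp add: ennreal_mult)
  also have "\<dots> \<le> ennreal (1 / \<beta>) * (\<integral>\<^sup>+z. ennreal (k z) \<partial>lborel) * ennreal (weight \<psi> V x)"
    unfolding m_def k_def using \<beta> fb by (intro mult_right_mono sq_dist_to_mean_le) auto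
  also have "\<dots> = ennreal (1 / \<beta>) * (\<integral>\<^sup>+z. ennreal (1 * k z * weight \<psi> V x) \<partial>lborel)"
    using nn_integral_scale[OF k_meas k_nonneg, of 1 "weight \<psi> V x"] W0 by (simp add: mult.assoc)
  also have "\<dots> \<le> ennreal (1 / \<beta>) * (\<integral>\<^sup>+z. ennreal (c0 * H z * exp (- V x)) \<partial>lborel)"
    unfolding c0_def H_def k_def using ball_kernel_bound[OF psi_pos gamma_pos Zpos e0]
    by (intro mult_left_mono nn_integral_mono ennreal_leI) auto
  also have "\<dots> = ennreal (1 / \<beta>) * ennreal c0 * ((\<integral>\<^sup>+z. ennreal (H z) \<partial>lborel) * ennreal (exp (- V x)))"
    using nn_integral_scale[OF H c0, of "exp (- V x)"] by (simp add: mult.assoc)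
  also have "ennreal (1 / \<beta>) * ennreal c0 = ennreal (2 / (\<beta> * partition_fn V * e0))"
    using \<beta> c0 unfolding c0_def by (simp add: ennreal_mult[symmetric] mult.assoc)
  finally show ?thesis
    unfolding m_def H_def .
qed

lemma local_poincare:
  fixes V :: "'a::euclidean_space \<Rightarrow> real"
  assumes V_meas: "V \<in> borel_measurable lborel"
    and V_locbdd: "\<And>K. compact K \<Longrightarrow> bounded (V ` K)"
    and psi_cont: "continuous_on {0<..} \<psi>"
    and psi_pos: "\<And>r. r > 0 \<Longrightarrow> \<psi> r > 0"
    and gamma_pos: "\<And>r. r > 0 \<Longrightarrow> gamma_fn \<psi> r > 0"
    and Zpos: "partition_fn V > 0"
  obtains c where "c > 0"
    and "\<And>f Kf. f \<in> borel_measurable lborel \<Longrightarrow> (\<And>x. \<bar>f x\<bar> \<le> Kf) \<Longrightarrow>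
           \<exists>m. (\<integral>\<^sup>+x. ennreal ((f x - m)\<^sup>2 * weight \<psi> V x) \<partial>lborel) \<le> ennreal c * D_form \<psi> V f"
proof -
  obtain MV where MV: "\<And>z. z \<in> ball (0::'a) 1 \<Longrightarrow> \<bar>V z\<bar> \<le> MV"
    using V_locbdd[of "cball 0 1"] unfolding bounded_iff by force
  define e0 where "e0 = exp (- MV)"
  have e0: "e0 > 0" "\<And>z. z \<in> ball 0 1 \<Longrightarrow> e0 \<le> exp (- V z)"
    unfolding e0_def using MV by force+
  define \<beta> where "\<beta> = measure lborel (ball (0::'a) 1)"
  define c where "c = 2 / (\<beta> * partition_fn V * e0)"
  have "c > 0"
    unfolding c_def \<beta>_def using Zpos e0 by simp
  moreover have "\<exists>m. (\<integral>\<^sup>+x. ennreal ((f x - m)\<^sup>2 * weight \<psi> V x) \<partial>lborel) \<le> ennreal c * D_form \<psi> V f"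
    if fm: "f \<in> borel_measurable lborel" and fb: "\<And>x. \<bar>f x\<bar> \<le> Kf" for f Kf
  proof
    let ?m = "(\<integral>z. indicator (ball 0 1) z * f z \<partial>lborel) / \<beta>"
    let ?Dx = "\<lambda>x. (\<integral>\<^sup>+y. ennreal (1/2 * (f y - f x)\<^sup>2 * \<psi> (norm (x - y)) * exp (- V y)) \<partial>lborel)
                    * ennreal (exp (- V x))"
    have "(\<integral>\<^sup>+x. ennreal ((f x - ?m)\<^sup>2 * weight \<psi> V x) \<partial>lborel) \<le> (\<integral>\<^sup>+x. ennreal c * ?Dx x \<partial>lborel)"
      unfolding c_def \<beta>_def
      by (intro nn_integral_mono local_poincare_pointwise[OF psi_cont psi_pos gamma_pos V_meas Zpos e0 fm fb])
    also have "\<dots> = ennreal c * D_form \<psi> V f"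
      unfolding D_form_def using D_outer_measurable[OF psi_cont V_meas fm]
      by (rule nn_integral_cmult)
    finally show "(\<integral>\<^sup>+x. ennreal ((f x - ?m)\<^sup>2 * weight \<psi> V x) \<partial>lborel) \<le> ennreal c * D_form \<psi> V f" .
  qed
  ultimately show ?thesis
    using that by blast
qed


subsection \<open>The weighted Poincare inequality\<close>

text \<open>Weighted Poincare inequality for bounded measurable functions, centred at \<open>\<mu>\<^sub>2\<^sub>V(f)\<close>:
  the local Poincare inequality gives a centre \<open>m\<close>, which is then replaced by \<open>\<mu>\<^sub>2\<^sub>V(f)\<close>
  at the cost of the factor \<open>2 + 2 K \<integral> W\<close>, finite by the integrability assumptions.\<close>
lemma weighted_poincare:
  fixes V :: "'a::euclidean_space \<Rightarrow> real"
  assumes V_meas: "V \<in> borel_measurable lborel"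
    and V_locbdd: "\<And>K. compact K \<Longrightarrow> bounded (V ` K)"
    and V_expbdd: "bounded (range (\<lambda>x. exp (- V x)))"
    and V_int: "integrable lborel (\<lambda>x. exp (- V x))"
    and psi_cont: "continuous_on {0<..} \<psi>"
    and psi_pos: "\<And>r. r > 0 \<Longrightarrow> \<psi> r > 0"
    and gamma_pos: "\<And>r. r > 0 \<Longrightarrow> gamma_fn \<psi> r > 0"
    and V_gamma_int: "set_integrable lborel {x. norm x \<ge> 1}
                        (\<lambda>x. exp (-3 * V x) / gamma_fn \<psi> (norm x))"
  obtains C1 where "C1 > 0"
    and "\<And>f Kf. f \<in> borel_measurable lborel \<Longrightarrow> (\<And>x. \<bar>f x\<bar> \<le> Kf) \<Longrightarrow>
           (\<integral>\<^sup>+x. ennreal ((f x - mu2V V f)\<^sup>2 * weight \<psi> V x) \<partial>lborel) \<le> ennreal C1 * D_form \<psi> V f"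
proof -
  have int2: "integrable lborel (\<lambda>x. exp (-2 * V x))"
    by (rule exp_2V_integrable[OF V_meas V_expbdd V_int])
  have Zpos: "partition_fn V > 0"
    by (rule partition_fn_pos[OF int2])
  obtain c where c: "c > 0" and loc: "\<And>f Kf. f \<in> borel_measurable lborel \<Longrightarrow> (\<And>x. \<bar>f x\<bar> \<le> Kf) \<Longrightarrow>
      \<exists>m. (\<integral>\<^sup>+x. ennreal ((f x - m)\<^sup>2 * weight \<psi> V x) \<partial>lborel) \<le> ennreal c * D_form \<psi> V f"
    using local_poincare[OF V_meas V_locbdd psi_cont psi_pos gamma_pos Zpos] by blast
  define IW where "IW = (\<integral>\<^sup>+x. ennreal (weight \<psi> V x) \<partial>lborel)"
  define K where "K = ennreal (1 / partition_fn V)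
                      * (\<integral>\<^sup>+x. ennreal (exp (-3 * V x) / gamma_fn \<psi> (norm x)) \<partial>lborel)"
  have "IW < \<infinity>" and "K < \<infinity>"
    unfolding IW_def K_def
    using weight_nn_integral_finite[OF V_meas V_int psi_pos gamma_pos Zpos]
      inverse_weight_nn_integral_finite[OF V_meas V_expbdd psi_pos gamma_pos V_gamma_int]
    by (auto simp: ennreal_mult_less_top)
  then have KIW: "ennreal (enn2real K * enn2real IW) = K * IW"
    by (simp add: ennreal_mult)
  define C1 where "C1 = (2 + 2 * (enn2real K * enn2real IW)) * c"
  have "C1 > 0"
    unfolding C1_def using c by (simp add: add_pos_nonneg)
  moreover have C1_eq: "ennreal C1 = (2 + 2 * K * IW) * ennreal c"
    unfolding C1_def using c KIW by (simp add: ennreal_mult ennreal_plus mult.assoc)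
  moreover have "(\<integral>\<^sup>+x. ennreal ((f x - mu2V V f)\<^sup>2 * weight \<psi> V x) \<partial>lborel) \<le> ennreal C1 * D_form \<psi> V f"
    if fm: "f \<in> borel_measurable lborel" and fb: "\<And>x. \<bar>f x\<bar> \<le> Kf" for f Kf
  proof -
    obtain m where m: "(\<integral>\<^sup>+x. ennreal ((f x - m)\<^sup>2 * weight \<psi> V x) \<partial>lborel) \<le> ennreal c * D_form \<psi> V f"
      using loc[OF fm fb] by blast
    have shift: "ennreal ((m - mu2V V f)\<^sup>2)
        \<le> (\<integral>\<^sup>+x. ennreal ((f x - m)\<^sup>2 * weight \<psi> V x) \<partial>lborel) * K"
      unfolding K_def by (rule mu2V_dist_le[OF V_meas int2 psi_pos gamma_pos fm fb])
    have "(\<integral>\<^sup>+x. ennreal ((f x - mu2V V f)\<^sup>2 * weight \<psi> V x) \<partial>lborel)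
        \<le> (2 + 2 * K * IW) * (\<integral>\<^sup>+x. ennreal ((f x - m)\<^sup>2 * weight \<psi> V x) \<partial>lborel)"
      unfolding IW_def
      by (rule weighted_variance_recentre[OF fm weight_measurable[OF psi_pos V_meas]
            weight_nonneg[OF psi_pos gamma_pos Zpos] shift])
    also have "\<dots> \<le> ennreal C1 * D_form \<psi> V f"
      using mult_left_mono[OF m, of "2 + 2 * K * IW"] C1_eq by (simp add: mult.assoc)
    finally show ?thesis .
  qed
  ultimately show ?thesis
    using that by blast
qed

text \<open>Functions in \<open>C\<^sub>b\<^sup>\<infinity>\<close> are bounded and (being differentiable, hence continuous) Borel.\<close>
lemma Cb_inf_measurable_bounded:
  fixes f :: "'a::euclidean_space \<Rightarrow> real"
  assumes "f \<in> Cb_inf"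
  shows "f \<in> borel_measurable lborel" and "\<exists>Kf. \<forall>x. \<bar>f x\<bar> \<le> Kf"
proof -
  have "(\<forall>x. iter_dderiv [] f differentiable (at x)) \<and> bounded (range (iter_dderiv [] f))"
    using assms unfolding Cb_inf_def by blast
  then have fd: "\<And>x. f differentiable (at x)" and fb: "bounded (range f)"
    by auto
  have "continuous_on UNIV f"
    using fd by (meson continuous_at_imp_continuous_on differentiable_imp_continuous_within)
  then show "f \<in> borel_measurable lborel"
    using borel_measurable_continuous_onI by simp
  show "\<exists>Kf. \<forall>x. \<bar>f x\<bar> \<le> Kf"
    using fb unfolding bounded_iff by auto
qed

lemma theorem_integrand_eq:
  "(f x - mu2V V f)\<^sup>2 * exp (V x) * gamma_fn \<psi> (norm x) * exp (-2 * V x) / (\<integral>y. exp (-2 * V y) \<partial>lborel)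
     = (f x - mu2V V f)\<^sup>2 * weight \<psi> V x"
proof -
  have rearrange: "a * b * g * c / Z = a * (g * (b * c) / Z)" for a b g c Z :: real
    by (simp add: ac_simps)
  have "exp (V x) * exp (-2 * V x) = exp (- V x)"
    by (simp add: mult_exp_exp)
  then show ?thesis
    unfolding weight_def partition_fn_def rearrange by simp
qed

theorem theorem5p1:
  fixes V :: "'a::euclidean_space \<Rightarrow> real" and \<psi> :: "real \<Rightarrow> real" and \<alpha>\<^sub>0 :: real
  assumes V_meas: "V \<in> borel_measurable lborel"
    and V_locbdd: "\<And>K. compact K \<Longrightarrow> bounded (V ` K)"
    and V_expbdd: "bounded (range (\<lambda>x. exp (- V x)))"
    and V_int: "integrable lborel (\<lambda>x. exp (- V x))"
    and psi_cont: "continuous_on {0<..} \<psi>"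
    and psi_pos: "\<And>r. r > 0 \<Longrightarrow> \<psi> r > 0"
    and psi_int1: "set_integrable lborel {0<..}
                     (\<lambda>r. \<psi> r * min 1 (r^2) * r ^ (DIM('a) - 1))"
    and psi_int2: "set_integrable lborel {0<..1} (\<lambda>r. r ^ (DIM('a) - 1) / \<psi> r)"
    and gamma_pos: "\<And>r. r > 0 \<Longrightarrow> gamma_fn \<psi> r > 0"
    and V_gamma_int: "set_integrable lborel {x. norm x \<ge> 1}
                     (\<lambda>x. exp (-3 * V x) / gamma_fn \<psi> (norm x))"
    and alpha0: "0 < \<alpha>\<^sub>0" "\<alpha>\<^sub>0 < 1"
    and psi_int3: "set_integrable lborel {1..}
                     (\<lambda>r. r powr (real (DIM('a)) + \<alpha>\<^sub>0 - 1) * \<psi> r)"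
    and limsup0: "Limsup at_infinity
                    (\<lambda>x::'a. ereal ((SUP z\<in>{z. norm z \<ge> norm x}. exp (- V z))
                          / (gamma_fn \<psi> (norm x) * norm x powr \<alpha>\<^sub>0))) = 0"
  shows "\<exists>C1>0. \<forall>f\<in>Cb_inf.
           (\<integral>\<^sup>+x. ennreal ((f x - mu2V V f)^2 * exp (V x) * gamma_fn \<psi> (norm x)
                 * exp (-2 * V x) / (\<integral>y. exp (-2 * V y) \<partial>lborel)) \<partial>lborel)
           \<le> ennreal C1 * D_form \<psi> V f"
proof -
  obtain C1 where C1: "C1 > 0"
    and poincare: "\<And>f Kf. f \<in> borel_measurable lborel \<Longrightarrow> (\<And>x. \<bar>f x\<bar> \<le> Kf) \<Longrightarrow>
        (\<integral>\<^sup>+x. ennreal ((f x - mu2V V f)\<^sup>2 * weight \<psi> V x) \<partial>lborel) \<le> ennreal C1 * D_form \<psi> V f"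
    using weighted_poincare[OF V_meas V_locbdd V_expbdd V_int psi_cont psi_pos gamma_pos V_gamma_int]
    by blast
  show ?thesis
  proof (intro exI[of _ C1] conjI ballI C1)
    fix f :: "'a \<Rightarrow> real" assume f: "f \<in> Cb_inf"
    obtain Kf where fb: "\<And>x. \<bar>f x\<bar> \<le> Kf"
      using Cb_inf_measurable_bounded(2)[OF f] by blast
    have "(\<integral>\<^sup>+x. ennreal ((f x - mu2V V f)\<^sup>2 * weight \<psi> V x) \<partial>lborel) \<le> ennreal C1 * D_form \<psi> V f"
      using poincare[OF Cb_inf_measurable_bounded(1)[OF f] fb] .
    then show "(\<integral>\<^sup>+x. ennreal ((f x - mu2V V f)^2 * exp (V x) * gamma_fn \<psi> (norm x)
                 * exp (-2 * V x) / (\<integral>y. exp (-2 * V y) \<partial>lborel)) \<partial>lborel)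
           \<le> ennreal C1 * D_form \<psi> V f"
      by (simp only: theorem_integrand_eq)
  qed
qed

end
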